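(* Let $n$ be even. The expected runtime of the SD-(1+1) EA with parameter $R$, where $n+1\le R\le n^{O(1)}$, on $\mathrm{Trap}$ is $O(2.34^n\ln n)$.
   Context: $\mathrm{Trap}\colon\{0,1\}^n\to\mathbb{R}$ is defined by $\mathrm{Trap}(x)=\sum_{i=1}^n x_i$ for $x\neq 0^n$ and $\mathrm{Trap}(0^n)=n+1$. The SD-(1+1) EA with parameter $R\ge1$ maximizing $f\colon\{0,1\}^n\to\mathbb{R}$ ($n$ even) works as follows: choose $x$ uniformly at random from $\{0,1\}^n$, set strength $r\gets 1$ and counter $u\gets0$. In each iteration: create $y$ from $x$ by flipping each bit independently with probability $r/n$; set $u\gets u+1$. If $f(y)>f(x)$, set $x\gets y$, $r\gets1$, $u\gets0$. Otherwise, if $f(y)=f(x)$ and $r=1$, set $x\gets y$; and (in the case $f(y)\le f(x)$) if $u>2(en/r)^r\ln(nR)$, set $r\gets\min\{r+1,n/2\}$ and $u\gets 0$. The runtime is the number of iterations until a global maximum is first created. *)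

theory Defs
  imports "HOL-Probability.Probability"
begin

text \<open>Bit strings of length n are represented as functions nat => bool that are
  False outside {..<n}.\<close>

definition bitstrings :: "nat \<Rightarrow> (nat \<Rightarrow> bool) set" where
  "bitstrings n = {x. \<forall>i\<ge>n. \<not> x i}"

definition Trap :: "nat \<Rightarrow> (nat \<Rightarrow> bool) \<Rightarrow> real" where
  "Trap n x = (if (\<forall>i<n. \<not> x i) then real n + 1
               else real (card {i. i < n \<and> x i}))"

definition is_global_max :: "nat \<Rightarrow> ((nat \<Rightarrow> bool) \<Rightarrow> real) \<Rightarrow> (nat \<Rightarrow> bool) \<Rightarrow> bool" where
  "is_global_max n f y = (y \<in> bitstrings n \<and> (\<forall>z\<in>bitstrings n. f z \<le> f y))"

text \<open>State: (current search point x, strength r, counter u, flag whether a global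
  maximum has been created so far).\<close>
type_synonym sd_state = "(nat \<Rightarrow> bool) \<times> nat \<times> nat \<times> bool"

definition sd_threshold :: "nat \<Rightarrow> real \<Rightarrow> nat \<Rightarrow> real" where
  "sd_threshold n R r = 2 * (exp 1 * real n / real r) ^ r * ln (real n * R)"

definition mutation_mask :: "nat \<Rightarrow> nat \<Rightarrow> (nat \<Rightarrow> bool) pmf" where
  "mutation_mask n r = Pi_pmf {..<n} False (\<lambda>_. bernoulli_pmf (real r / real n))"

definition sd_step :: "((nat \<Rightarrow> bool) \<Rightarrow> real) \<Rightarrow> nat \<Rightarrow> real \<Rightarrow> sd_state \<Rightarrow> sd_state pmf" where
  "sd_step f n R s = (case s of (x, r, u, hit) \<Rightarrow>
     map_pmf (\<lambda>m.
       let y = (\<lambda>i. x i \<noteq> m i);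
           u' = u + 1;
           hit' = (hit \<or> is_global_max n f y)
       in if f y > f x then (y, 1, 0, hit')
          else (let x' = (if f y = f x \<and> r = 1 then y else x)
                in if real u' > sd_threshold n R r
                   then (x', min (r + 1) (n div 2), 0, hit')
                   else (x', r, u', hit')))
     (mutation_mask n r))"

definition sd_init :: "((nat \<Rightarrow> bool) \<Rightarrow> real) \<Rightarrow> nat \<Rightarrow> sd_state pmf" where
  "sd_init f n = map_pmf (\<lambda>x. (x, 1, 0, is_global_max n f x))
                   (Pi_pmf {..<n} False (\<lambda>_. bernoulli_pmf (1/2)))"

primrec sd_dist :: "((nat \<Rightarrow> bool) \<Rightarrow> real) \<Rightarrow> nat \<Rightarrow> real \<Rightarrow> nat \<Rightarrow> sd_state pmf" where
  "sd_dist f n R 0 = sd_init f n"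
| "sd_dist f n R (Suc t) = bind_pmf (sd_dist f n R t) (sd_step f n R)"

text \<open>Expected runtime T (number of iterations until a global maximum is first
  created), via E[T] = sum_{t>=0} Pr[T > t]; T > t iff no global maximum was
  created within the first t iterations (nor is the initial point optimal).\<close>
definition sd_expected_runtime :: "((nat \<Rightarrow> bool) \<Rightarrow> real) \<Rightarrow> nat \<Rightarrow> real \<Rightarrow> ennreal" where
  "sd_expected_runtime f n R =
     (\<Sum>t. ennreal (measure_pmf.prob (sd_dist f n R t) {s. \<not> snd (snd (snd s))}))"

end

theory Submission
  imports Defs "HOL-Analysis.Complex_Transcendental" "HOL-Real_Asymp.Real_Asymp"
begin

text \<open>
  The proof is a drift argument with an explicit potential. Since the thresholds
  \<open>2 (e n / r)^r ln (n R)\<close> increase with \<open>r\<close>, the counter \<open>u\<close> never exceeds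
  \<open>M \<approx> 2 (2e)^{n/2} ln (n R)\<close>. While \<open>r < n/2\<close>, every iteration improves the
  fitness, increases \<open>r\<close> or increases \<open>u\<close>, so the lexicographic potential
  (number of zeros, \<open>n/2 - r\<close>, \<open>M - u\<close>) drops deterministically. At \<open>r = n/2\<close> the
  offspring is uniformly distributed, so the optimum \<open>0^n\<close> is created with
  probability \<open>2^-n\<close>; an additive term \<open>2^n\<close> in the potential turns this into an
  expected drop of at least one. The initial potential is \<open>O(n^2 M + 2^n)\<close>, and
  \<open>\<surd>(2e) < 2.335\<close> leaves room to absorb the polynomial factors into \<open>2.34^n\<close>.
\<close>

lemma nn_integral_drift_suminf_le:
  fixes D :: "nat \<Rightarrow> 'a pmf" and K :: "'a \<Rightarrow> 'a pmf" and c V :: "'a \<Rightarrow> ennreal"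
  assumes D_Suc: "\<And>t. D (Suc t) = bind_pmf (D t) K"
    and drift: "\<And>t s. s \<in> set_pmf (D t) \<Longrightarrow> c s + (\<integral>\<^sup>+ s'. V s' \<partial>K s) \<le> V s"
  shows "(\<Sum>t. \<integral>\<^sup>+ s. c s \<partial>D t) \<le> (\<integral>\<^sup>+ s. V s \<partial>D 0)"
proof -
  have step: "(\<integral>\<^sup>+ s. c s \<partial>D t) + (\<integral>\<^sup>+ s. V s \<partial>D (Suc t)) \<le> (\<integral>\<^sup>+ s. V s \<partial>D t)" for t
  proof -
    have "(\<integral>\<^sup>+ s. c s \<partial>D t) + (\<integral>\<^sup>+ s. V s \<partial>D (Suc t))
        = (\<integral>\<^sup>+ s. c s + (\<integral>\<^sup>+ s'. V s' \<partial>K s) \<partial>D t)"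
      by (simp add: D_Suc nn_integral_add)
    also have "\<dots> \<le> (\<integral>\<^sup>+ s. V s \<partial>D t)"
      by (intro nn_integral_mono_AE) (simp add: AE_measure_pmf_iff drift)
    finally show ?thesis .
  qed
  have partial: "(\<Sum>t<T. \<integral>\<^sup>+ s. c s \<partial>D t) + (\<integral>\<^sup>+ s. V s \<partial>D T) \<le> (\<integral>\<^sup>+ s. V s \<partial>D 0)" for T
  proof (induction T)
    case (Suc T)
    have "(\<Sum>t<Suc T. \<integral>\<^sup>+ s. c s \<partial>D t) + (\<integral>\<^sup>+ s. V s \<partial>D (Suc T))
        = (\<Sum>t<T. \<integral>\<^sup>+ s. c s \<partial>D t) + ((\<integral>\<^sup>+ s. c s \<partial>D T) + (\<integral>\<^sup>+ s. V s \<partial>D (Suc T)))"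
      by (simp add: add.assoc)
    also have "\<dots> \<le> (\<Sum>t<T. \<integral>\<^sup>+ s. c s \<partial>D t) + (\<integral>\<^sup>+ s. V s \<partial>D T)"
      by (intro add_left_mono step)
    finally show ?case using Suc.IH by (rule order_trans)
  qed simp
  show ?thesis
  proof (rule suminf_le_const[OF summableI])
    show "(\<Sum>t<T. \<integral>\<^sup>+ s. c s \<partial>D t) \<le> (\<integral>\<^sup>+ s. V s \<partial>D 0)" for T
      using partial[of T] by (rule order_trans[rotated]) simp
  qed
qed

lemma nn_integral_pmf_le_minus_one:
  fixes p :: "'a pmf" and f :: "'a \<Rightarrow> ennreal"
  assumes "\<And>m. m \<in> set_pmf p \<Longrightarrow> f m \<le> P" "f x = 0" "1 \<le> P * pmf p x"
  shows "1 + (\<integral>\<^sup>+ m. f m \<partial>p) \<le> P"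
proof -
  have "1 + (\<integral>\<^sup>+ m. f m \<partial>p) \<le> (\<integral>\<^sup>+ m. f m \<partial>p) + P * emeasure p {x}"
    using assms(3) by (simp add: emeasure_pmf_single add.commute add_right_mono)
  also have "\<dots> = (\<integral>\<^sup>+ m. f m + P * indicator {x} m \<partial>p)"
    by (simp add: nn_integral_add)
  also have "\<dots> \<le> (\<integral>\<^sup>+ m. P \<partial>p)"
    using assms(1,2) by (intro nn_integral_mono_AE) (auto simp: AE_measure_pmf_iff indicator_def)
  finally show ?thesis by simp
qed

lemma exp1_div_power_le_Suc:
  fixes a :: real and r :: nat
  assumes "r > 0" "real r + 1 \<le> a"
  shows "(exp 1 * a / r) ^ r \<le> (exp 1 * a / (r + 1)) ^ (r + 1)"
proof -
  define q where "q = (1 + 1 / real r) ^ r"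
  have q_pos: "q > 0" unfolding q_def by (intro zero_less_power) (simp add: add_pos_nonneg)
  have "q \<le> exp (1 / real r) ^ r"
    unfolding q_def by (intro power_mono) (auto simp: add.commute exp_ge_add_one_self)
  also have "\<dots> = exp 1" using assms(1) by (simp add: exp_of_nat_mult[symmetric])
  also have "\<dots> \<le> exp 1 * a / (r + 1)"
    using mult_right_mono[OF assms(2), of "exp 1"] by (simp add: field_simps)
  finally have q_le: "1 \<le> exp 1 * a / (r + 1) / q"
    using q_pos by (simp only: le_divide_eq_1_pos)
  have "(exp 1 * a / (r + 1)) ^ (r + 1) = (exp 1 * a / r) ^ r * (exp 1 * a / (r + 1) / q)"
    using assms(1) by (simp add: q_def power_divide field_simps)
  also have "\<dots> \<ge> (exp 1 * a / r) ^ r"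
    using mult_left_mono[OF q_le, of "(exp 1 * a / r) ^ r"] assms by simp
  finally show ?thesis .
qed

lemma exp1_div_power_mono:
  fixes a :: real and r s :: nat
  assumes "0 < r" "r \<le> s" "real s \<le> a"
  shows "(exp 1 * a / r) ^ r \<le> (exp 1 * a / s) ^ s"
  using assms(2,3)
proof (induction s rule: dec_induct)
  case (step k)
  then show ?case
    using exp1_div_power_le_Suc[of k a] assms(1) by fastforce
qed simp

definition num_ones :: "nat \<Rightarrow> (nat \<Rightarrow> bool) \<Rightarrow> nat" where
  "num_ones n x = card {i. i < n \<and> x i}"

lemma num_ones_le: "num_ones n x \<le> n"
  unfolding num_ones_def using card_mono[of "{..<n}" "{i. i < n \<and> x i}"] by auto

lemma Trap_eq_num_ones: "\<exists>i<n. x i \<Longrightarrow> Trap n x = num_ones n x"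
  by (auto simp: Trap_def num_ones_def)

lemma is_global_max_Trap_zero:
  assumes "z \<in> bitstrings n" "\<forall>i<n. \<not> z i"
  shows "is_global_max n (Trap n) z"
  unfolding is_global_max_def
proof (intro conjI ballI)
  show "Trap n w \<le> Trap n z" for w
    using assms(2) num_ones_le[of n w] by (auto simp: Trap_def num_ones_def)
qed (rule assms(1))

lemma mutation_mask_in_bitstrings: "m \<in> set_pmf (mutation_mask n r) \<Longrightarrow> m \<in> bitstrings n"
  using set_Pi_pmf_subset[of "{..<n}" False] by (fastforce simp: mutation_mask_def bitstrings_def)

lemma pmf_mutation_mask_half:
  assumes "even n" "n > 0" "m \<in> bitstrings n"
  shows "pmf (mutation_mask n (n div 2)) m = (1 / 2) ^ n"
proof -
  have half: "real (n div 2) / real n = 1 / 2" using assms(1,2) by (auto elim!: evenE)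
  have "pmf (mutation_mask n (n div 2)) m = (\<Prod>i<n. pmf (bernoulli_pmf (1 / 2)) (m i))"
    unfolding mutation_mask_def half using assms(3) by (intro pmf_Pi') (auto simp: bitstrings_def)
  then show ?thesis by simp
qed

definition sd_update ::
  "((nat \<Rightarrow> bool) \<Rightarrow> real) \<Rightarrow> nat \<Rightarrow> real \<Rightarrow>
   (nat \<Rightarrow> bool) \<Rightarrow> nat \<Rightarrow> nat \<Rightarrow> bool \<Rightarrow> (nat \<Rightarrow> bool) \<Rightarrow> sd_state" where
  "sd_update f n R x r u hit m =
     (let y = (\<lambda>i. x i \<noteq> m i); hit' = (hit \<or> is_global_max n f y)
      in if f y > f x then (y, 1, 0, hit')
         else (let x' = (if f y = f x \<and> r = 1 then y else x)
               in if real (u + 1) > sd_threshold n R r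
                  then (x', min (r + 1) (n div 2), 0, hit')
                  else (x', r, u + 1, hit')))"

lemma sd_step_eq_map_pmf_sd_update:
  "sd_step f n R (x, r, u, hit) = map_pmf (sd_update f n R x r u hit) (mutation_mask n r)"
  unfolding sd_step_def by (simp, intro map_pmf_cong) (simp_all add: sd_update_def Let_def)

definition trap_state_valid :: "nat \<Rightarrow> sd_state \<Rightarrow> bool" where
  "trap_state_valid n s = (case s of (x, r, u, hit) \<Rightarrow>
     x \<in> bitstrings n \<and> 1 \<le> r \<and> r \<le> n div 2 \<and> (\<not> hit \<longrightarrow> (\<exists>i<n. x i)))"

lemma trap_state_valid_sd_update:
  assumes "n \<ge> 2" "trap_state_valid n (x, r, u, hit)" "m \<in> bitstrings n"
  shows "trap_state_valid n (sd_update (Trap n) n R x r u hit m)"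
proof -
  define y where "y = (\<lambda>i. x i \<noteq> m i)"
  have y: "y \<in> bitstrings n"
    using assms(2,3) by (auto simp: y_def bitstrings_def trap_state_valid_def)
  then have "\<not> is_global_max n (Trap n) y \<Longrightarrow> \<exists>i<n. y i"
    using is_global_max_Trap_zero by blast
  with y show ?thesis
    using assms(1,2) unfolding sd_update_def Let_def y_def[symmetric]
    by (auto simp: trap_state_valid_def)
qed

lemma trap_state_valid_sd_dist:
  assumes "n \<ge> 2" "s \<in> set_pmf (sd_dist (Trap n) n R t)"
  shows "trap_state_valid n s"
  using assms(2)
proof (induction t arbitrary: s)
  case 0
  then obtain x where x: "x \<in> set_pmf (Pi_pmf {..<n} False (\<lambda>_. bernoulli_pmf (1 / 2)))"
    and s: "s = (x, 1, 0, is_global_max n (Trap n) x)"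
    by (auto simp: sd_init_def)
  have "x \<in> bitstrings n"
    using set_Pi_pmf_subset[of "{..<n}" False] x by (fastforce simp: bitstrings_def)
  then show ?case
    using is_global_max_Trap_zero assms(1) by (auto simp: s trap_state_valid_def)
next
  case (Suc t)
  then obtain x r u hit where prev: "(x, r, u, hit) \<in> set_pmf (sd_dist (Trap n) n R t)"
    and "s \<in> set_pmf (sd_step (Trap n) n R (x, r, u, hit))"
    by (auto simp: prod_eq_iff)
  then obtain m where "m \<in> set_pmf (mutation_mask n r)" "s = sd_update (Trap n) n R x r u hit m"
    by (auto simp: sd_step_eq_map_pmf_sd_update)
  then show ?case
    using Suc.IH[OF prev] trap_state_valid_sd_update assms(1) mutation_mask_in_bitstrings by blast
qed

definition max_phase_length :: "nat \<Rightarrow> real \<Rightarrow> nat" where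
  "max_phase_length n R = nat \<lceil>2 * (2 * exp 1) ^ (n div 2) * ln (real n * R)\<rceil> + 1"

lemma sd_threshold_less_max_phase_length:
  assumes "even n" "1 \<le> r" "r \<le> n div 2" "0 \<le> ln (real n * R)"
  shows "sd_threshold n R r < max_phase_length n R"
proof -
  have "exp 1 * real n / real (n div 2) = 2 * exp 1"
    using assms(1-3) by (auto elim!: evenE)
  then have "(exp 1 * real n / r) ^ r \<le> (2 * exp 1) ^ (n div 2)"
    using exp1_div_power_mono[of r "n div 2" "real n"] assms(2,3) by simp
  then have "sd_threshold n R r \<le> 2 * (2 * exp 1) ^ (n div 2) * ln (real n * R)"
    unfolding sd_threshold_def using assms(4) by (intro mult_right_mono mult_left_mono) auto
  then show ?thesis
    unfolding max_phase_length_def by linarith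
qed

definition trap_stage :: "nat \<Rightarrow> (nat \<Rightarrow> bool) \<Rightarrow> nat \<Rightarrow> nat" where
  "trap_stage n x r = (n div 2 + 1) * (n - num_ones n x) + (n div 2 - r)"

definition trap_potential :: "nat \<Rightarrow> real \<Rightarrow> sd_state \<Rightarrow> nat" where
  "trap_potential n R s = (case s of (x, r, u, hit) \<Rightarrow> if hit then 0 else
     (max_phase_length n R + 1) * trap_stage n x r
     + (if r < n div 2 then max_phase_length n R - u else 0) + 2 ^ n)"

lemma trap_potential_eq_0_of_hit: "snd (snd (snd s)) \<Longrightarrow> trap_potential n R s = 0"
  by (cases s) (simp add: trap_potential_def)

lemma trap_potential_le:
  "trap_potential n R s \<le> (max_phase_length n R + 1) * (n div 2 + 1) * (n + 1) + 2 ^ n"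
proof -
  obtain x r u hit where s: "s = (x, r, u, hit)" by (cases s)
  define M where "M = max_phase_length n R"
  have "trap_stage n x r \<le> (n div 2 + 1) * n + n div 2"
    unfolding trap_stage_def by (intro add_mono mult_le_mono2) auto
  have "trap_potential n R s \<le> (M + 1) * trap_stage n x r + M + 2 ^ n"
    by (simp add: s trap_potential_def M_def)
  also have "\<dots> \<le> (M + 1) * ((n div 2 + 1) * n + n div 2) + M + 2 ^ n"
    using \<open>trap_stage n x r \<le> _\<close> by (intro add_right_mono mult_le_mono2)
  also have "\<dots> \<le> (M + 1) * (n div 2 + 1) * (n + 1) + 2 ^ n"
    by (simp add: algebra_simps)
  finally show ?thesis by (simp add: M_def)
qed

lemma trap_potential_sd_update_hit: "trap_potential n R (sd_update f n R x r u True m) = 0"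
  by (simp add: sd_update_def Let_def trap_potential_def)

lemma trap_potential_sd_update_self: "trap_potential n R (sd_update (Trap n) n R x r u hit x) = 0"
proof -
  have "is_global_max n (Trap n) (\<lambda>_. False)"
    by (rule is_global_max_Trap_zero) (auto simp: bitstrings_def)
  then show ?thesis by (simp add: sd_update_def Let_def trap_potential_def)
qed

lemma trap_stage_less_of_num_ones_less:
  "num_ones n x < num_ones n y \<Longrightarrow> trap_stage n y 1 < trap_stage n x r"
proof -
  assume "num_ones n x < num_ones n y"
  then have "n - num_ones n y + 1 \<le> n - num_ones n x"
    using num_ones_le[of n y] by linarith
  have "trap_stage n y 1 < (n div 2 + 1) * (n - num_ones n y + 1)"
    by (simp add: trap_stage_def)
  also have "\<dots> \<le> (n div 2 + 1) * (n - num_ones n x)"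
    by (rule mult_le_mono2) fact
  also have "\<dots> \<le> trap_stage n x r"
    by (simp add: trap_stage_def)
  finally show ?thesis .
qed

lemma trap_stage_Suc_less: "r < n div 2 \<Longrightarrow> trap_stage n x (r + 1) < trap_stage n x r"
  unfolding trap_stage_def by (intro add_strict_left_mono) simp

lemma sd_update_Trap_cases:
  assumes "trap_state_valid n (x, r, u, False)" "m \<in> bitstrings n"
  obtains (opt) "snd (snd (snd (sd_update (Trap n) n R x r u False m)))"
  | (better) y where "sd_update (Trap n) n R x r u False m = (y, 1, 0, False)"
      "num_ones n x < num_ones n y"
  | (raise) x' where "sd_update (Trap n) n R x r u False m = (x', min (r + 1) (n div 2), 0, False)"
      "num_ones n x' = num_ones n x" "real (u + 1) > sd_threshold n R r"
  | (count) x' where "sd_update (Trap n) n R x r u False m = (x', r, u + 1, False)"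
      "num_ones n x' = num_ones n x" "\<not> real (u + 1) > sd_threshold n R r"
proof -
  define y where "y = (\<lambda>i. x i \<noteq> m i)"
  define x' where "x' = (if Trap n y = Trap n x \<and> r = 1 then y else x)"
  have x: "x \<in> bitstrings n" "\<exists>i<n. x i"
    using assms(1) by (auto simp: trap_state_valid_def)
  have y: "y \<in> bitstrings n"
    using x(1) assms(2) by (auto simp: y_def bitstrings_def)
  show ?thesis
  proof (cases "is_global_max n (Trap n) y")
    case True
    then show ?thesis
      using opt unfolding sd_update_def Let_def y_def[symmetric] by simp
  next
    case False
    then have "\<exists>i<n. y i"
      using y is_global_max_Trap_zero by blast
    then have Trap_y: "Trap n y = num_ones n y" and Trap_x: "Trap n x = num_ones n x"
      using x(2) by (simp_all add: Trap_eq_num_ones)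
    have ones_x': "num_ones n x' = num_ones n x"
      by (auto simp: x'_def Trap_y Trap_x)
    have update: "sd_update (Trap n) n R x r u False m =
        (if Trap n x < Trap n y then (y, 1, 0, False)
         else if sd_threshold n R r < real (u + 1) then (x', min (r + 1) (n div 2), 0, False)
         else (x', r, u + 1, False))"
      using False unfolding sd_update_def Let_def y_def[symmetric] x'_def[symmetric] by simp
    show ?thesis
    proof (cases "Trap n x < Trap n y")
      case True
      then show ?thesis
        using better[of y] update Trap_x Trap_y by simp
    next
      case False
      then show ?thesis
        using raise[of x'] count[of x'] update ones_x'
        by (cases "sd_threshold n R r < real (u + 1)") simp_all
    qed
  qed
qed

lemma trap_potential_sd_update:
  assumes "even n" "0 \<le> ln (real n * R)" "trap_state_valid n (x, r, u, False)" "m \<in> bitstrings n"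
  shows "trap_potential n R (sd_update (Trap n) n R x r u False m) + (if r < n div 2 then 1 else 0)
         \<le> trap_potential n R (x, r, u, False)"
proof -
  define h where "h = n div 2"
  define M where "M = max_phase_length n R"
  define k where "k = trap_stage n x r"
  have r: "1 \<le> r" "r \<le> h"
    using assms(3) by (auto simp: trap_state_valid_def h_def)
  have pot: "trap_potential n R (x', r', u', False)
      = (M + 1) * trap_stage n x' r' + (if r' < h then M - u' else 0) + 2 ^ n" for x' r' u'
    by (simp add: trap_potential_def M_def h_def)
  have drop: "(M + 1) * k' + M + 1 \<le> (M + 1) * k" if "k' < k" for k'
    using mult_le_mono2[of "k' + 1" k "M + 1"] that by simp
  have "trap_potential n R (sd_update (Trap n) n R x r u False m) + (if r < h then 1 else 0)
      \<le> (M + 1) * k + (if r < h then M - u else 0) + 2 ^ n"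
    using assms(3,4)
  proof (cases rule: sd_update_Trap_cases[where R = R])
    case opt
    then have "trap_potential n R (sd_update (Trap n) n R x r u False m) = 0"
      by (rule trap_potential_eq_0_of_hit)
    then show ?thesis by (simp add: trans_le_add2)
  next
    case (better y)
    then have "trap_stage n y 1 < k"
      unfolding k_def by (intro trap_stage_less_of_num_ones_less)
    then show ?thesis
      using better drop[of "trap_stage n y 1"] by (simp add: pot)
  next
    case (raise x')
    then have stage: "trap_stage n x' r' = trap_stage n x r'" for r'
      by (simp add: trap_stage_def)
    show ?thesis
    proof (cases "r < h")
      case True
      then show ?thesis
        using raise drop[of "trap_stage n x' (r + 1)"] trap_stage_Suc_less[of r n x]
        by (simp add: pot stage k_def h_def)
    next
      case False
      then show ?thesis
        using raise r by (simp add: pot stage k_def h_def)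
    qed
  next
    case (count x')
    moreover have "u + 1 < M"
      using count sd_threshold_less_max_phase_length[OF assms(1) r(1) _ assms(2)] r(2)
      by (fastforce simp: M_def h_def)
    ultimately show ?thesis
      by (simp add: pot k_def trap_stage_def Suc_diff_Suc)
  qed
  then show ?thesis
    by (simp add: pot k_def h_def)
qed

lemma nn_integral_trap_potential_sd_update_le:
  assumes "even n" "n \<ge> 2" "0 \<le> ln (real n * R)" "trap_state_valid n (x, r, u, False)"
  shows "1 + (\<integral>\<^sup>+ m. of_nat (trap_potential n R (sd_update (Trap n) n R x r u False m))
               \<partial>mutation_mask n r)
         \<le> (of_nat (trap_potential n R (x, r, u, False)) :: ennreal)"
proof -
  define P where "P = trap_potential n R (x, r, u, False)"
  define pot' where "pot' m = trap_potential n R (sd_update (Trap n) n R x r u False m)" for m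
  have x: "x \<in> bitstrings n" and "r \<le> n div 2"
    using assms(4) by (auto simp: trap_state_valid_def)
  have drop: "pot' m + (if r < n div 2 then 1 else 0) \<le> P" if "m \<in> set_pmf (mutation_mask n r)" for m
    using trap_potential_sd_update[OF assms(1,3,4) mutation_mask_in_bitstrings[OF that]]
    by (simp add: pot'_def P_def)
  have "1 + (\<integral>\<^sup>+ m. of_nat (pot' m) \<partial>mutation_mask n r) \<le> (of_nat P :: ennreal)"
  proof (cases "r < n div 2")
    case True
    have "1 + (\<integral>\<^sup>+ m. of_nat (pot' m) \<partial>mutation_mask n r)
        = (\<integral>\<^sup>+ m. of_nat (pot' m + 1) \<partial>mutation_mask n r)"
      by (simp add: nn_integral_add add.commute)
    also have "\<dots> \<le> (\<integral>\<^sup>+ m. of_nat P \<partial>mutation_mask n r)"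
      using drop True
      by (intro nn_integral_mono_AE) (simp add: AE_measure_pmf_iff of_nat_mono del: of_nat_Suc)
    finally show ?thesis by simp
  next
    case False
    with \<open>r \<le> n div 2\<close> have "pmf (mutation_mask n r) x = (1 / 2) ^ n"
      using pmf_mutation_mask_half[OF assms(1) _ x] assms(2) by simp
    moreover have "2 ^ n \<le> P"
      by (simp add: P_def trap_potential_def)
    then have "1 \<le> real P * (1 / 2) ^ n"
      by (simp add: field_simps flip: of_nat_le_iff)
    ultimately show ?thesis
      using drop False trap_potential_sd_update_self
      by (intro nn_integral_pmf_le_minus_one[where x = x])
         (auto simp: pot'_def ennreal_of_nat_eq_real_of_nat ennreal_mult'[symmetric] ennreal_leI)
  qed
  then show ?thesis
    by (simp add: P_def pot'_def)
qed

lemma trap_potential_drift: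
  assumes "even n" "n \<ge> 2" "0 \<le> ln (real n * R)" "trap_state_valid n s"
  shows "indicator {s. \<not> snd (snd (snd s))} s
           + (\<integral>\<^sup>+ s'. of_nat (trap_potential n R s') \<partial>sd_step (Trap n) n R s)
         \<le> (of_nat (trap_potential n R s) :: ennreal)"
proof -
  obtain x r u hit where s: "s = (x, r, u, hit)" by (cases s)
  show ?thesis
  proof (cases hit)
    case True
    then show ?thesis
      by (simp add: s sd_step_eq_map_pmf_sd_update trap_potential_sd_update_hit)
  next
    case False
    then show ?thesis
      using nn_integral_trap_potential_sd_update_le[OF assms(1-3)] assms(4)
      by (simp add: s sd_step_eq_map_pmf_sd_update)
  qed
qed

lemma sd_expected_runtime_Trap_le:
  assumes "even n" "n \<ge> 2" "0 \<le> ln (real n * R)"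
  shows "sd_expected_runtime (Trap n) n R
         \<le> of_nat ((max_phase_length n R + 1) * (n div 2 + 1) * (n + 1) + 2 ^ n)"
proof -
  let ?D = "sd_dist (Trap n) n R"
  have "sd_expected_runtime (Trap n) n R
      = (\<Sum>t. \<integral>\<^sup>+ s. indicator {s. \<not> snd (snd (snd s))} s \<partial>?D t)"
    by (simp add: sd_expected_runtime_def measure_pmf.emeasure_eq_measure)
  also have "\<dots> \<le> (\<integral>\<^sup>+ s. of_nat (trap_potential n R s) \<partial>?D 0)"
  proof (rule nn_integral_drift_suminf_le)
    show "?D (Suc t) = bind_pmf (?D t) (sd_step (Trap n) n R)" for t
      by simp
  qed (rule trap_potential_drift[OF assms trap_state_valid_sd_dist[OF assms(2)]])
  also have "\<dots> \<le> (\<integral>\<^sup>+ s. of_nat ((max_phase_length n R + 1) * (n div 2 + 1) * (n + 1) + 2 ^ n) \<partial>?D 0)"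
    by (intro nn_integral_mono) (simp only: of_nat_le_iff trap_potential_le)
  finally show ?thesis by simp
qed

lemma eventually_square_mult_power_le:
  "eventually (\<lambda>n::nat. (real n + 1) ^ 2 * 2.335 ^ n \<le> 2.34 ^ n) sequentially"
  by real_asymp

lemma two_exp1_power_half_le: "(2 * exp 1) ^ (n div 2) \<le> (2.335 :: real) ^ n"
proof -
  have "(2 * exp 1) ^ (n div 2) \<le> ((2.335 :: real) ^ 2) ^ (n div 2)"
    using e_less_272 by (intro power_mono) (auto simp: power2_eq_square)
  also have "\<dots> \<le> 2.335 ^ n"
    unfolding power_mult[symmetric] by (intro power_increasing) auto
  finally show ?thesis .
qed

lemma one_le_ln_of_nat: "3 \<le> n \<Longrightarrow> 1 \<le> ln (real n)"
  using exp_le ln_ge_iff[of "real n" 1] by simp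

lemma max_phase_length_le:
  fixes c R :: real
  assumes "n \<ge> 3" "real n + 1 \<le> R" "R \<le> real n powr c"
  shows "real (max_phase_length n R + 1) \<le> (2 * c + 5) * (2 * exp 1) ^ (n div 2) * ln (real n)"
proof -
  define E :: real where "E = (2 * exp 1) ^ (n div 2)"
  define L where "L = ln (real n * R)"
  have ln_n: "1 \<le> ln (real n)"
    using assms(1) by (rule one_le_ln_of_nat)
  have "1 \<le> real n * R"
    using mult_mono[of 1 "real n" 1 R] assms(1,2) by simp
  then have "0 \<le> L" by (simp add: L_def)
  have "real n * R \<le> real n powr (1 + c)"
    using assms by (simp add: powr_add)
  then have "L \<le> (1 + c) * ln (real n)"
    using \<open>1 \<le> real n * R\<close> assms(1) by (simp add: L_def ln_powr flip: ln_le_cancel_iff)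
  have "1 \<le> E"
    unfolding E_def using exp_ge_add_one_self[of 1] by (intro one_le_power) simp
  have "real (max_phase_length n R + 1) \<le> 2 * E * L + 3"
    using \<open>0 \<le> L\<close> \<open>1 \<le> E\<close> unfolding max_phase_length_def E_def L_def by simp linarith
  also have "\<dots> \<le> 2 * E * ((1 + c) * ln (real n)) + 3 * (E * ln (real n))"
    using \<open>L \<le> _\<close> \<open>1 \<le> E\<close> ln_n mult_mono[OF \<open>1 \<le> E\<close> ln_n] by (intro add_mono mult_left_mono) auto
  also have "\<dots> = (2 * c + 5) * E * ln (real n)"
    by (simp add: algebra_simps)
  finally show ?thesis by (simp add: E_def)
qed

lemma trap_potential_bound_le:
  fixes c R :: real
  assumes "c > 0" "n \<ge> 3" "(real n + 1) ^ 2 * 2.335 ^ n \<le> 2.34 ^ n"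
    "real n + 1 \<le> R" "R \<le> real n powr c"
  shows "real ((max_phase_length n R + 1) * (n div 2 + 1) * (n + 1) + 2 ^ n)
         \<le> (2 * c + 6) * 2.34 ^ n * ln (real n)"
proof -
  have ln_n: "1 \<le> ln (real n)"
    using assms(2) by (rule one_le_ln_of_nat)
  have "real ((max_phase_length n R + 1) * (n div 2 + 1) * (n + 1))
      = real (max_phase_length n R + 1) * real ((n div 2 + 1) * (n + 1))"
    by (simp only: of_nat_mult mult.assoc)
  also have "\<dots> \<le> ((2 * c + 5) * 2.335 ^ n * ln (real n)) * (real n + 1) ^ 2"
  proof (intro mult_mono)
    show "real (max_phase_length n R + 1) \<le> (2 * c + 5) * 2.335 ^ n * ln (real n)"
      using max_phase_length_le[OF assms(2,4,5)] two_exp1_power_half_le[of n] assms(1) ln_n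
      by (smt (verit) mult_left_mono mult_right_mono)
    have "(n div 2 + 1) * (n + 1) \<le> (n + 1) ^ 2"
      unfolding power2_eq_square by (intro mult_le_mono1) simp
    then have "real ((n div 2 + 1) * (n + 1)) \<le> real ((n + 1) ^ 2)"
      by (rule of_nat_mono)
    then show "real ((n div 2 + 1) * (n + 1)) \<le> (real n + 1) ^ 2"
      by (simp only: of_nat_power of_nat_add of_nat_1)
  qed (use assms(1) ln_n in auto)
  also have "\<dots> = (2 * c + 5) * ln (real n) * ((real n + 1) ^ 2 * 2.335 ^ n)"
    by (simp add: algebra_simps)
  also have "\<dots> \<le> (2 * c + 5) * ln (real n) * 2.34 ^ n"
    using assms(1,3) ln_n by (intro mult_left_mono) auto
  finally have main: "real ((max_phase_length n R + 1) * (n div 2 + 1) * (n + 1))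
      \<le> (2 * c + 5) * 2.34 ^ n * ln (real n)"
    by (simp add: algebra_simps)
  have "(2 :: real) ^ n \<le> 2.34 ^ n"
    by (intro power_mono) auto
  also have "\<dots> \<le> 2.34 ^ n * ln (real n)"
    using ln_n by simp
  finally show ?thesis
    using main by (simp add: algebra_simps)
qed

theorem mainTheorem7:
  fixes c :: real
  assumes "c > 0"
  shows "\<exists>C N. \<forall>n \<ge> N. \<forall>R :: real. even n \<and> real n + 1 \<le> R \<and> R \<le> real n powr c \<longrightarrow>
           sd_expected_runtime (Trap n) n R \<le> ennreal (C * 2.34 ^ n * ln (real n))"
proof -
  obtain N where N: "\<And>n. n \<ge> N \<Longrightarrow> (real n + 1) ^ 2 * 2.335 ^ n \<le> 2.34 ^ n"
    using eventually_square_mult_power_le unfolding eventually_sequentially by blast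
  have "sd_expected_runtime (Trap n) n R \<le> ennreal ((2 * c + 6) * 2.34 ^ n * ln (real n))"
    if "n \<ge> max N 3" "even n" "real n + 1 \<le> R" "R \<le> real n powr c" for n R
  proof -
    have "1 \<le> real n * R"
      using mult_mono[of 1 "real n" 1 R] that by simp
    then have "sd_expected_runtime (Trap n) n R
        \<le> of_nat ((max_phase_length n R + 1) * (n div 2 + 1) * (n + 1) + 2 ^ n)"
      using that by (intro sd_expected_runtime_Trap_le) auto
    also have "\<dots> \<le> ennreal ((2 * c + 6) * 2.34 ^ n * ln (real n))"
      unfolding ennreal_of_nat_eq_real_of_nat using trap_potential_bound_le[OF assms, of n R] N that
      by (intro ennreal_leI) simp
    finally show ?thesis .
  qed
  then show ?thesis by blast
qed

end
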